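(* Let $\gamma\in(0,2)$, $d\ge1$ and $G\in\mathscr S^d_\gamma$. Then there exist $H^G_1\in L^1(\mathbb R^d)$ and a constant $C_1=C_1(G)>0$ such that for all $\hat u\in\mathbb R^d$, $$\sup_{s\in[0,T]}|\Delta^{\gamma/2}G_s(\hat u)|\le H^G_1(\hat u)\le C_1.$$
   Context: Fix $T>0$; $c_\gamma>0$ with $\sum_{\hat z\ne0}c_\gamma|\hat z|^{-d-\gamma}=1$. $\Delta^{\gamma/2}G(\hat u)=c_\gamma\lim_{\varepsilon\to0^+}\int_{\{|\hat v-\hat u|\ge\varepsilon\}}\frac{G(\hat u)-G(\hat v)}{|\hat v-\hat u|^{d+\gamma}}\mathrm d\hat v$. For $k\in\mathbb N$, $\mathscr S^k(\mathbb R^d)$ is the set of continuous $G:[0,\infty)\times\mathbb R^d\to\mathbb R$ whose spatial partial derivatives up to order $k$ exist and are continuous, such that for all $r\in\mathbb N$ and $j\le k$, $\sup_{(s,\hat u)\in[0,T]\times\mathbb R^d}|\hat u|^r[G_s]_j(\hat u)<\infty$, where $[G_s]_j=|G_s|+\sum_{m=1}^j\sum_{i_1,\dots,i_m=1}^d|\partial_{i_1}\cdots\partial_{i_m}G_s|$. $\mathscr S^k_c(\mathbb R^d)$: those $G\in\mathscr S^k(\mathbb R^d)$ for which there is a compact $K$ with $\sup_{s\in[0,T]}|G_s(\hat u)|=0$ for $\hat u\notin K$. $\mathscr S^d_\gamma=\mathscr S^2_c(\mathbb R^d)$ if $\gamma\in(0,1]$ or $d\ge2$, and $\mathscr S^2(\mathbb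 R)$ if $d=1,\gamma\in(1,2)$. *)

theory Defs
  imports "HOL-Analysis.Analysis"
begin

text \<open>Space R^d is modelled as real^'n with d = CARD('n).
  Time-dependent test functions are G :: real => real^'n => real, G s u = G_s(u).\<close>

definition lattice_nonzero :: "(real^'n) set" where
  "lattice_nonzero = {z. (\<forall>i. z $ i \<in> \<int>)} - {0}"

definition c_gamma :: "real \<Rightarrow> 'n::finite itself \<Rightarrow> real" where
  "c_gamma \<gamma> _ = 1 / infsum (\<lambda>z::real^'n. norm z powr (-(real CARD('n) + \<gamma>)))
      lattice_nonzero"

definition frac_lap :: "real \<Rightarrow> (real^'n::finite \<Rightarrow> real) \<Rightarrow> real^'n \<Rightarrow> real" where
  "frac_lap \<gamma> f u = c_gamma \<gamma> TYPE('n) *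
     Lim (at_right 0) (\<lambda>\<epsilon>. LINT v:{v. dist v u \<ge> \<epsilon>}|lborel.
         (f u - f v) / dist v u powr (real CARD('n) + \<gamma>))"

definition pderiv_i :: "'n::finite \<Rightarrow> (real^'n \<Rightarrow> real) \<Rightarrow> real^'n \<Rightarrow> real" where
  "pderiv_i i f x = deriv (\<lambda>t. f (x + t *\<^sub>R axis i 1)) 0"

fun pderivs :: "'n::finite list \<Rightarrow> (real^'n \<Rightarrow> real) \<Rightarrow> real^'n \<Rightarrow> real" where
  "pderivs [] f = f"
| "pderivs (i # is) f = pderiv_i i (pderivs is f)"

definition bracket :: "nat \<Rightarrow> (real^'n::finite \<Rightarrow> real) \<Rightarrow> real^'n \<Rightarrow> real" where
  "bracket j f u = \<bar>f u\<bar> +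
     (\<Sum>m\<in>{1..j}. \<Sum>is\<in>{is::'n list. length is = m}. \<bar>pderivs is f u\<bar>)"

definition Sk :: "real \<Rightarrow> nat \<Rightarrow> (real \<Rightarrow> real^'n::finite \<Rightarrow> real) set" where
  "Sk T k = {G.
     \<comment> \<open>spatial partial derivatives up to order k exist\<close>
     (\<forall>is i. length is < k \<longrightarrow> (\<forall>s\<ge>0. \<forall>x.
        (\<lambda>t. pderivs is (G s) (x + t *\<^sub>R axis i 1)) differentiable (at 0)))
     \<comment> \<open>G and these derivatives are continuous on [0,oo) x R^d\<close>
   \<and> (\<forall>is. length is \<le> k \<longrightarrow>
        continuous_on ({0..} \<times> UNIV) (\<lambda>(s, x). pderivs is (G s) x))
     \<comment> \<open>decay\<close>
   \<and> (\<forall>r::nat. \<forall>j\<le>k. \<exists>M. \<forall>s\<in>{0..T}. \<forall>u. norm u ^ r * bracket j (G s) u \<le> M)}"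

definition Sk_c :: "real \<Rightarrow> nat \<Rightarrow> (real \<Rightarrow> real^'n::finite \<Rightarrow> real) set" where
  "Sk_c T k = {G \<in> Sk T k. \<exists>K. compact K \<and> (\<forall>u. u \<notin> K \<longrightarrow> (\<forall>s\<in>{0..T}. G s u = 0))}"

definition S_gamma :: "real \<Rightarrow> real \<Rightarrow> (real \<Rightarrow> real^'n::finite \<Rightarrow> real) set" where
  "S_gamma T \<gamma> = (if \<gamma> \<le> 1 \<or> CARD('n) \<ge> 2 then Sk_c T 2 else Sk T 2)"

end

theory Submission
  imports Defs
begin

text \<open>Write \<open>\<alpha> = d + \<gamma>\<close>. Substituting \<open>v = u + h\<close> and averaging over \<open>\<plusminus>h\<close> turns the
  truncated integrals into integrals of the second difference quotient
  \<open>(2 G(u) - G(u + h) - G(u - h)) / (2 |h|^\<alpha>)\<close>. Since \<open>G\<close> and its derivatives of order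
  at most 2 are bounded by \<open>C (1 + |x|)^-\<alpha>\<close> uniformly in time, this quotient is at most
  \<open>(1 + |u|)^-\<alpha>\<close> times a function of \<open>h\<close> whose integral does not depend on \<open>u\<close>:
  \<open>|h|^(2-\<alpha>)\<close> near 0 by Taylor's formula along the coordinate axes, and \<open>|h|^-\<alpha>\<close> plus
  translates of the weight away from 0. Dominated convergence gives the principal value, and
  its bound is a multiple of the integrable, bounded weight \<open>(1 + |u|)^-\<alpha>\<close>.\<close>

lemma lborel_distr_unit_affine:
  fixes t :: "'a::euclidean_space"
  assumes "\<bar>c\<bar> = 1"
  shows "distr lborel borel (\<lambda>x. t + c *\<^sub>R x) = lborel"
  using lborel_affine[of c t] assms by (simp add: density_1)

lemma integral_lborel_unit_affine:
  fixes f :: "'a::euclidean_space \<Rightarrow> 'b::{banach, second_countable_topology}"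
  assumes "\<bar>c\<bar> = 1" and [measurable]: "f \<in> borel_measurable borel"
  shows "(\<integral>x. f (t + c *\<^sub>R x) \<partial>lborel) = (\<integral>x. f x \<partial>lborel)"
proof -
  have "(\<integral>x. f x \<partial>lborel) = (\<integral>x. f x \<partial>distr lborel borel (\<lambda>x. t + c *\<^sub>R x))"
    by (simp add: lborel_distr_unit_affine assms(1))
  also have "\<dots> = (\<integral>x. f (t + c *\<^sub>R x) \<partial>lborel)"
    by (rule integral_distr) simp_all
  finally show ?thesis ..
qed

lemma integrable_lborel_unit_affine:
  fixes f :: "'a::euclidean_space \<Rightarrow> 'b::{banach, second_countable_topology}"
  assumes "\<bar>c\<bar> = 1" and "integrable lborel f"
  shows "integrable lborel (\<lambda>x. f (t + c *\<^sub>R x))"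
proof -
  have [measurable]: "f \<in> borel_measurable borel"
    using assms(2) by simp
  have "integrable (distr lborel borel (\<lambda>x. t + c *\<^sub>R x)) f"
    by (simp add: lborel_distr_unit_affine assms)
  then show ?thesis
    by (subst (asm) integrable_distr_eq) simp_all
qed

lemma integrable_if_dominated_on_balls:
  fixes f :: "'a::euclidean_space \<Rightarrow> real"
  assumes [measurable]: "f \<in> borel_measurable borel"
    and nonneg: "\<And>x. 0 \<le> f x"
    and dom: "\<And>x. f x \<noteq> 0 \<Longrightarrow> \<exists>k. f x \<le> a k \<and> norm x \<le> r k"
    and a: "\<And>k. 0 \<le> a k" and r: "\<And>k. 0 \<le> r k"
    and summable: "summable (\<lambda>k. a k * r k ^ DIM('a))"
  shows "integrable lborel f"
proof (rule integrableI_nonneg)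
  define V where "V = unit_ball_vol (real DIM('a))"
  have V: "0 \<le> V"
    by (simp add: V_def)
  define g where "g k x = ennreal (a k) * indicator (cball (0::'a) (r k)) x" for k x
  have pointwise: "ennreal (f x) \<le> (\<Sum>k. g k x)" for x
  proof (cases "f x = 0")
    case False
    then obtain k where "f x \<le> a k" "norm x \<le> r k"
      using dom by blast
    then have "ennreal (f x) \<le> g k x"
      by (simp add: g_def ennreal_leI)
    also have "\<dots> \<le> (\<Sum>k. g k x)"
      using sum_le_suminf[of "\<lambda>k. g k x" "{k}"] by simp
    finally show ?thesis .
  qed simp
  have "(\<integral>\<^sup>+x. ennreal (f x) \<partial>lborel) \<le> (\<integral>\<^sup>+x. (\<Sum>k. g k x) \<partial>lborel)"
    by (intro nn_integral_mono pointwise)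
  also have "\<dots> = (\<Sum>k. \<integral>\<^sup>+x. g k x \<partial>lborel)"
    by (rule nn_integral_suminf)
       (auto simp: g_def[abs_def] intro!: borel_measurable_times_ennreal
           borel_measurable_indicator borel_closed)
  also have "\<dots> = (\<Sum>k. ennreal (a k) * emeasure lborel (cball (0::'a) (r k)))"
    by (simp add: g_def nn_integral_cmult_indicator)
  also have "\<dots> = (\<Sum>k. ennreal (V * (a k * r k ^ DIM('a))))"
  proof (rule suminf_cong)
    fix k
    have "emeasure lborel (cball (0::'a) (r k)) = ennreal (V * r k ^ DIM('a))"
      using r[of k] by (simp add: emeasure_cball V_def)
    then show "ennreal (a k) * emeasure lborel (cball (0::'a) (r k))
        = ennreal (V * (a k * r k ^ DIM('a)))"
      using a[of k] by (simp add: ennreal_mult'[symmetric] mult.left_commute)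
  qed
  also have "\<dots> = ennreal (\<Sum>k. V * (a k * r k ^ DIM('a)))"
    using a r V summable by (intro suminf_ennreal2 summable_mult) simp_all
  also have "\<dots> < \<infinity>"
    by simp
  finally show "(\<integral>\<^sup>+x. ennreal (f x) \<partial>lborel) < \<infinity>" .
qed (use nonneg in auto)

lemma obtain_dyadic_interval:
  fixes t :: real
  assumes "1 \<le> t"
  obtains k :: nat where "2 ^ k \<le> t" "t < 2 ^ Suc k"
proof
  define k where "k = nat \<lfloor>log 2 t\<rfloor>"
  have k: "real k \<le> log 2 t" "log 2 t < real k + 1"
    using assms by (auto simp: k_def)
  show "2 ^ k \<le> t"
    using k(1) assms by (simp add: le_log_iff powr_realpow[symmetric])
  show "t < 2 ^ Suc k"
    using k(2) assms by (simp add: log_less_iff powr_realpow[symmetric] powr_add add.commute)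
qed

lemma powr_le_on_dyadic_interval:
  fixes t c :: real
  assumes "2 ^ k \<le> t" "t \<le> 2 ^ Suc k"
  shows "t powr c \<le> (1 + 2 powr c) * (2 powr c) ^ k"
proof -
  have pow: "((2::real) ^ j) powr c = (2 powr c) ^ j" for j
    by (simp add: powr_realpow[symmetric] powr_powr powr_power mult.commute)
  have "t powr c \<le> (2 ^ k) powr c + (2 ^ Suc k) powr c"
  proof (cases "0 \<le> c")
    case True
    then have "t powr c \<le> (2 ^ Suc k) powr c"
      using assms by (intro powr_mono2) auto
    then show ?thesis
      by (simp add: add_increasing)
  next
    case False
    then have "t powr c \<le> (2 ^ k) powr c"
      using assms by (intro powr_mono2') auto
    then show ?thesis
      by (simp add: add_increasing2)
  qed
  also have "\<dots> = (1 + 2 powr c) * (2 powr c) ^ k"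
    unfolding pow by (simp add: algebra_simps)
  finally show ?thesis .
qed

lemma integrable_norm_powr_outside_ball:
  fixes \<alpha> :: real
  assumes "real DIM('a) < \<alpha>"
  shows "integrable lborel (\<lambda>x::'a::euclidean_space. indicator {x. 1 \<le> norm x} x * norm x powr -\<alpha>)"
proof (rule integrable_if_dominated_on_balls
    [where a = "\<lambda>k. (1 + 2 powr -\<alpha>) * (2 powr -\<alpha>) ^ k" and r = "\<lambda>k. 2 ^ Suc k"])
  fix x :: 'a
  assume "indicator {x. 1 \<le> norm x} x * norm x powr -\<alpha> \<noteq> 0"
  then have "1 \<le> norm x"
    by (auto simp: indicator_def)
  then obtain k where k: "2 ^ k \<le> norm x" "norm x < 2 ^ Suc k"
    by (rule obtain_dyadic_interval)
  then have "indicator {x. 1 \<le> norm x} x * norm x powr -\<alpha> \<le> (1 + 2 powr -\<alpha>) * (2 powr -\<alpha>) ^ k"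
    using \<open>1 \<le> norm x\<close> by (simp add: powr_le_on_dyadic_interval)
  with k show "\<exists>k. indicator {x. 1 \<le> norm x} x * norm x powr -\<alpha> \<le> (1 + 2 powr -\<alpha>) * (2 powr -\<alpha>) ^ k
      \<and> norm x \<le> 2 ^ Suc k"
    by (intro exI[of _ k]) simp
next
  define q where "q = 2 powr -\<alpha> * 2 ^ DIM('a)"
  have "q = 2 powr (real DIM('a) - \<alpha>)"
    by (simp add: q_def powr_diff powr_minus divide_inverse powr_realpow mult.commute)
  then have "q < 1"
    using assms by (simp add: powr_less_one)
  then have "summable (\<lambda>k. ((1 + 2 powr -\<alpha>) * 2 ^ DIM('a)) * q ^ k)"
    by (intro summable_mult summable_geometric) (simp add: q_def)
  moreover have "(1 + 2 powr -\<alpha>) * (2 powr -\<alpha>) ^ k * (2 ^ Suc k) ^ DIM('a)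
      = ((1 + 2 powr -\<alpha>) * 2 ^ DIM('a)) * q ^ k" for k
    by (simp add: q_def power_mult_distrib power_mult[symmetric] mult.commute)
  ultimately show "summable (\<lambda>k. (1 + 2 powr -\<alpha>) * (2 powr -\<alpha>) ^ k * (2 ^ Suc k) ^ DIM('a))"
    by presburger
qed auto

lemma integrable_norm_powr_in_ball:
  fixes \<beta> :: real
  assumes "- real DIM('a) < \<beta>"
  shows "integrable lborel (\<lambda>x::'a::euclidean_space. indicator (cball 0 1) x * norm x powr \<beta>)"
proof (rule integrable_if_dominated_on_balls
    [where a = "\<lambda>k. (1 + 2 powr -\<beta>) * (2 powr -\<beta>) ^ k" and r = "\<lambda>k. (1 / 2) ^ k"])
  fix x :: 'a
  assume "indicator (cball 0 1) x * norm x powr \<beta> \<noteq> 0"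
  then have x: "0 < norm x" "norm x \<le> 1"
    by (auto simp: indicator_def)
  then have "1 \<le> 1 / norm x"
    by simp
  then obtain k where k: "2 ^ k \<le> 1 / norm x" "1 / norm x < 2 ^ Suc k"
    by (rule obtain_dyadic_interval)
  have "norm x powr \<beta> = (1 / norm x) powr -\<beta>"
    using x by (simp add: powr_minus_divide powr_divide)
  also have "\<dots> \<le> (1 + 2 powr -\<beta>) * (2 powr -\<beta>) ^ k"
    using k by (simp add: powr_le_on_dyadic_interval)
  finally have "indicator (cball 0 1) x * norm x powr \<beta> \<le> (1 + 2 powr -\<beta>) * (2 powr -\<beta>) ^ k"
    using x by simp
  moreover have "norm x \<le> (1 / 2) ^ k"
    using k(1) x by (simp add: power_one_over le_divide_eq mult.commute)
  ultimately show "\<exists>k. indicator (cball 0 1) x * norm x powr \<beta> \<le> (1 + 2 powr -\<beta>) * (2 powr -\<beta>) ^ k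
      \<and> norm x \<le> (1 / 2) ^ k"
    by blast
next
  define q where "q = 2 powr -\<beta> / 2 ^ DIM('a)"
  have "q = 2 powr (- \<beta> - real DIM('a))"
    by (simp add: q_def powr_diff powr_realpow)
  then have "q < 1"
    using assms by (simp add: powr_less_one)
  then have "summable (\<lambda>k. (1 + 2 powr -\<beta>) * q ^ k)"
    by (intro summable_mult summable_geometric) (simp add: q_def)
  moreover have "(2 powr -\<beta>) ^ k * ((1 / 2) ^ k) ^ DIM('a) = q ^ k" for k
    by (simp add: q_def power_divide power_mult[symmetric] mult.commute)
  ultimately show "summable (\<lambda>k. (1 + 2 powr -\<beta>) * (2 powr -\<beta>) ^ k * ((1 / 2) ^ k) ^ DIM('a))"
    by (simp add: mult.assoc)
next
  have [measurable]: "cball (0::'a) 1 \<in> sets borel"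
    by simp
  show "(\<lambda>x::'a. indicator (cball 0 1) x * norm x powr \<beta>) \<in> borel_measurable borel"
    by measurable
qed auto

definition poly_weight :: "real \<Rightarrow> 'a::real_normed_vector \<Rightarrow> real" where
  "poly_weight \<alpha> x = (1 + norm x) powr -\<alpha>"

lemma poly_weight_nonneg: "0 \<le> poly_weight \<alpha> x"
  by (simp add: poly_weight_def)

lemma poly_weight_zero [simp]: "poly_weight \<alpha> 0 = 1"
  by (simp add: poly_weight_def)

lemma poly_weight_le_one: "0 \<le> \<alpha> \<Longrightarrow> poly_weight \<alpha> x \<le> 1"
  unfolding poly_weight_def using powr_mono2'[of "-\<alpha>" 1 "1 + norm x"] by simp

lemma mult_poly_weight_le_abs:
  assumes "0 \<le> \<alpha>"
  shows "c * poly_weight \<alpha> x \<le> \<bar>c\<bar>"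
proof -
  have "c * poly_weight \<alpha> x \<le> \<bar>c\<bar> * poly_weight \<alpha> x"
    by (intro mult_right_mono) (simp_all add: poly_weight_nonneg)
  also have "\<dots> \<le> \<bar>c\<bar>"
    by (rule mult_left_le[OF poly_weight_le_one[OF assms] abs_ge_zero])
  finally show ?thesis .
qed

lemma poly_weight_minus [simp]: "poly_weight \<alpha> (- x) = poly_weight \<alpha> x"
  by (simp add: poly_weight_def)

lemma borel_measurable_poly_weight [measurable]:
  "poly_weight \<alpha> \<in> borel_measurable (borel :: 'a::euclidean_space measure)"
  unfolding poly_weight_def[abs_def] by measurable

lemma integrable_poly_weight:
  assumes "real DIM('a) < \<alpha>"
  shows "integrable lborel (poly_weight \<alpha> :: 'a::euclidean_space \<Rightarrow> real)"
proof (rule Bochner_Integration.integrable_bound)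
  show "integrable lborel
      (\<lambda>x::'a. indicator (cball 0 1) x + indicator {x. 1 \<le> norm x} x * norm x powr -\<alpha>)"
    using assms
    by (intro Bochner_Integration.integrable_add integrable_norm_powr_outside_ball
        integrable_real_indicator)
       (auto simp: emeasure_cball)
  have "0 \<le> \<alpha>"
    using assms of_nat_0_le_iff[of "DIM('a)"] by linarith
  have "poly_weight \<alpha> x \<le> indicator (cball 0 1) x + indicator {x. 1 \<le> norm x} x * norm x powr -\<alpha>"
    for x :: 'a
  proof (cases "norm x \<le> 1")
    case True
    then show ?thesis
      using poly_weight_le_one[OF \<open>0 \<le> \<alpha>\<close>, of x] by (simp add: add_increasing2)
  next
    case False
    then have "(1 + norm x) powr -\<alpha> \<le> norm x powr -\<alpha>"
      using \<open>0 \<le> \<alpha>\<close> by (intro powr_mono2') auto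
    then show ?thesis
      using False by (simp add: poly_weight_def)
  qed
  then show "AE x in lborel. norm (poly_weight \<alpha> x) \<le>
      norm (indicator (cball 0 1) x + indicator {x::'a. 1 \<le> norm x} x * norm x powr -\<alpha>)"
    by (intro AE_I2) (simp add: abs_of_nonneg poly_weight_nonneg order_trans[OF _ abs_ge_self])
qed simp

lemma powr_neg_le_of_le_mult:
  fixes a c x y :: real
  assumes "0 < x" "0 < c" "x \<le> c * y" "0 \<le> a"
  shows "y powr -a \<le> c powr a * x powr -a"
proof -
  have "y powr -a \<le> (x / c) powr -a"
    using assms by (intro powr_mono2') (auto simp: field_simps)
  also have "\<dots> = x powr -a / c powr -a"
    using assms by (simp add: powr_divide)
  also have "\<dots> = c powr a * x powr -a"
    by (simp add: powr_minus divide_inverse)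
  finally show ?thesis .
qed

lemma poly_weight_le_near:
  assumes "norm (y - u) \<le> 1" "0 \<le> \<alpha>"
  shows "poly_weight \<alpha> y \<le> 2 powr \<alpha> * poly_weight \<alpha> u"
proof -
  have "norm u \<le> norm y + 1"
    using assms(1) norm_triangle_sub[of u y] by (simp add: norm_minus_commute)
  then have "1 + norm u \<le> 2 * (1 + norm y)"
    unfolding distrib_left using norm_ge_zero[of y] by linarith
  then show ?thesis
    unfolding poly_weight_def using assms(2)
    by (intro powr_neg_le_of_le_mult) (auto simp: add_pos_nonneg)
qed

text \<open>Peetre-type splitting: either \<open>u + h\<close> stays comparable to \<open>u\<close>, or \<open>h\<close> itself is
  comparable to \<open>u\<close>.\<close>
lemma poly_weight_mult_norm_powr_le:
  fixes u h :: "'a::real_normed_vector"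
  assumes "1 \<le> norm h" "0 \<le> \<alpha>"
  shows "poly_weight \<alpha> (u + h) * norm h powr -\<alpha>
    \<le> 2 powr \<alpha> * poly_weight \<alpha> u * norm h powr -\<alpha>
      + 3 powr \<alpha> * poly_weight \<alpha> u * poly_weight \<alpha> (u + h)"
proof (cases "2 * norm h \<le> norm u")
  case True
  have "1 + norm u \<le> 2 * (1 + norm (u + h))"
    using True norm_triangle_ineq2[of u "- h"] by simp
  then have "poly_weight \<alpha> (u + h) \<le> 2 powr \<alpha> * poly_weight \<alpha> u"
    unfolding poly_weight_def using assms(2)
    by (intro powr_neg_le_of_le_mult) (auto simp: add_pos_nonneg)
  then have "poly_weight \<alpha> (u + h) * norm h powr -\<alpha> \<le> 2 powr \<alpha> * poly_weight \<alpha> u * norm h powr -\<alpha>"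
    by (intro mult_right_mono) auto
  then show ?thesis
    by (simp add: add_increasing2 poly_weight_nonneg)
next
  case False
  then have "1 + norm u \<le> 3 * norm h"
    using assms(1) by simp
  then have "norm h powr -\<alpha> \<le> 3 powr \<alpha> * poly_weight \<alpha> u"
    unfolding poly_weight_def using assms
    by (intro powr_neg_le_of_le_mult) (auto simp: add_pos_nonneg)
  then have "poly_weight \<alpha> (u + h) * norm h powr -\<alpha>
      \<le> 3 powr \<alpha> * poly_weight \<alpha> u * poly_weight \<alpha> (u + h)"
    using poly_weight_nonneg[of \<alpha> "u + h"] by (simp add: mult_left_mono mult.commute)
  then show ?thesis
    by (simp add: add_increasing poly_weight_nonneg)
qed

lemma linearization_bound_real:
  fixes \<psi> \<psi>' :: "real \<Rightarrow> real"
  assumes der: "\<And>t. (\<psi> has_real_derivative \<psi>' t) (at t)"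
    and bound: "\<And>t. \<bar>t\<bar> \<le> \<bar>a\<bar> \<Longrightarrow> \<bar>\<psi>' t - c\<bar> \<le> K"
  shows "\<bar>\<psi> a - \<psi> 0 - a * c\<bar> \<le> K * \<bar>a\<bar>"
proof -
  have "norm ((\<psi> a - c * a) - (\<psi> 0 - c * 0)) \<le> K * norm (a - 0)"
  proof (rule field_differentiable_bound[where S = "cball 0 \<bar>a\<bar>"])
    show "((\<lambda>t. \<psi> t - c * t) has_field_derivative \<psi>' t - c) (at t within cball 0 \<bar>a\<bar>)" for t
      by (auto intro!: derivative_eq_intros has_field_derivative_at_within[OF der])
    show "norm (\<psi>' t - c) \<le> K" if "t \<in> cball 0 \<bar>a\<bar>" for t
      using that bound by simp
  qed auto
  then show ?thesis
    by (simp add: algebra_simps)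
qed

definition restrict_coords :: "'n::finite set \<Rightarrow> real^'n \<Rightarrow> real^'n" where
  "restrict_coords S h = (\<chi> j. if j \<in> S then h $ j else 0)"

lemma restrict_coords_empty [simp]: "restrict_coords {} h = 0"
  by (simp add: restrict_coords_def vec_eq_iff)

lemma restrict_coords_UNIV [simp]: "restrict_coords UNIV h = h"
  by (simp add: restrict_coords_def vec_eq_iff)

lemma restrict_coords_insert:
  "i \<notin> S \<Longrightarrow> restrict_coords (insert i S) h = restrict_coords S h + (h $ i) *\<^sub>R axis i 1"
  by (auto simp: restrict_coords_def vec_eq_iff axis_def)

text \<open>Only partial derivatives are assumed, so \<open>u\<close> is joined to \<open>u + h\<close> by a path of segments
  parallel to the axes, one coordinate at a time; the path stays in the box around \<open>u\<close> with
  half-widths \<open>\<bar>h $ j\<bar>\<close>.\<close>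
lemma coordinatewise_linearization_bound:
  fixes \<phi> :: "real^'n::finite \<Rightarrow> real" and D :: "'n \<Rightarrow> real^'n \<Rightarrow> real"
  assumes der: "\<And>x i. ((\<lambda>t. \<phi> (x + t *\<^sub>R axis i 1)) has_real_derivative D i x) (at 0)"
    and bound: "\<And>i y. (\<forall>j. \<bar>(y - u) $ j\<bar> \<le> \<bar>h $ j\<bar>) \<Longrightarrow> \<bar>D i y - c i\<bar> \<le> K"
  shows "\<bar>\<phi> (u + h) - \<phi> u - (\<Sum>i\<in>UNIV. h $ i * c i)\<bar> \<le> K * (\<Sum>i\<in>UNIV. \<bar>h $ i\<bar>)"
proof -
  have "\<bar>\<phi> (u + restrict_coords S h) - \<phi> u - (\<Sum>i\<in>S. h $ i * c i)\<bar> \<le> K * (\<Sum>i\<in>S. \<bar>h $ i\<bar>)"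
    for S
  proof (induction S rule: finite_induct[OF finite])
    case 1
    then show ?case
      by simp
  next
    case (2 i S)
    define p where "p = u + restrict_coords S h"
    define \<psi> where "\<psi> t = \<phi> (p + t *\<^sub>R axis i 1)" for t
    have "(\<psi> has_real_derivative D i (p + t *\<^sub>R axis i 1)) (at t)" for t
    proof -
      have "((\<lambda>s. \<psi> (s + t)) has_real_derivative D i (p + t *\<^sub>R axis i 1)) (at 0)"
        using der[of "p + t *\<^sub>R axis i 1" i]
        by (simp add: \<psi>_def scaleR_add_left add.assoc add.commute add.left_commute)
      then show ?thesis
        using DERIV_shift[of \<psi> _ 0 t] by simp
    qed
    moreover have "\<bar>D i (p + t *\<^sub>R axis i 1) - c i\<bar> \<le> K" if "\<bar>t\<bar> \<le> \<bar>h $ i\<bar>" for t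
      using that 2(2) by (intro bound) (auto simp: p_def restrict_coords_def axis_def)
    ultimately have "\<bar>\<psi> (h $ i) - \<psi> 0 - h $ i * c i\<bar> \<le> K * \<bar>h $ i\<bar>"
      by (rule linearization_bound_real)
    moreover have "\<phi> (u + restrict_coords (insert i S) h) = \<psi> (h $ i)"
      "\<phi> (u + restrict_coords S h) = \<psi> 0"
      using 2(2) by (simp_all add: restrict_coords_insert \<psi>_def p_def add.assoc)
    ultimately show ?case
      using 2(1-3) by (simp add: algebra_simps)
  qed
  from this[of UNIV] show ?thesis
    by simp
qed

lemma coordinatewise_lipschitz_bound:
  fixes \<phi> :: "real^'n::finite \<Rightarrow> real" and D :: "'n \<Rightarrow> real^'n \<Rightarrow> real"
  assumes "\<And>x i. ((\<lambda>t. \<phi> (x + t *\<^sub>R axis i 1)) has_real_derivative D i x) (at 0)"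
    and "\<And>i y. (\<forall>j. \<bar>(y - u) $ j\<bar> \<le> \<bar>h $ j\<bar>) \<Longrightarrow> \<bar>D i y\<bar> \<le> K"
  shows "\<bar>\<phi> (u + h) - \<phi> u\<bar> \<le> K * (\<Sum>i\<in>UNIV. \<bar>h $ i\<bar>)"
  using coordinatewise_linearization_bound[of \<phi> D u h "\<lambda>_. 0" K] assms by simp

lemma second_difference_bound:
  fixes f :: "real^'n::finite \<Rightarrow> real" and Df :: "'n \<Rightarrow> real^'n \<Rightarrow> real"
    and D2f :: "'n \<Rightarrow> 'n \<Rightarrow> real^'n \<Rightarrow> real"
  assumes d1: "\<And>x i. ((\<lambda>t. f (x + t *\<^sub>R axis i 1)) has_real_derivative Df i x) (at 0)"
    and d2: "\<And>x i j. ((\<lambda>t. Df i (x + t *\<^sub>R axis j 1)) has_real_derivative D2f j i x) (at 0)"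
    and bound: "\<And>i j y. (\<forall>k. \<bar>(y - u) $ k\<bar> \<le> \<bar>h $ k\<bar>) \<Longrightarrow> \<bar>D2f j i y\<bar> \<le> K"
  shows "\<bar>f (u + h) + f (u - h) - 2 * f u\<bar> \<le> 2 * K * (\<Sum>k\<in>UNIV. \<bar>h $ k\<bar>)\<^sup>2"
proof -
  define S where "S = (\<Sum>k\<in>UNIV. \<bar>h $ k\<bar>)"
  have "\<bar>D2f j i u\<bar> \<le> K" for i j
    by (rule bound) simp
  then have "0 \<le> K"
    by (meson abs_ge_zero order_trans)
  have lipschitz: "\<bar>Df i y - Df i u\<bar> \<le> K * S" if y: "\<forall>k. \<bar>(y - u) $ k\<bar> \<le> \<bar>h $ k\<bar>" for i y
  proof -
    have "\<bar>Df i (u + (y - u)) - Df i u\<bar> \<le> K * (\<Sum>k\<in>UNIV. \<bar>(y - u) $ k\<bar>)"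
    proof (rule coordinatewise_lipschitz_bound[OF d2])
      fix j y'
      assume "\<forall>k. \<bar>(y' - u) $ k\<bar> \<le> \<bar>(y - u) $ k\<bar>"
      with y have "\<forall>k. \<bar>(y' - u) $ k\<bar> \<le> \<bar>h $ k\<bar>"
        by (meson order_trans)
      then show "\<bar>D2f j i y'\<bar> \<le> K"
        by (rule bound)
    qed
    also have "\<dots> \<le> K * S"
      unfolding S_def using y \<open>0 \<le> K\<close> by (intro mult_left_mono sum_mono) auto
    finally show ?thesis
      by simp
  qed
  have plus: "\<bar>f (u + h) - f u - (\<Sum>i\<in>UNIV. h $ i * Df i u)\<bar> \<le> (K * S) * S"
    unfolding S_def by (rule coordinatewise_linearization_bound[OF d1 lipschitz[unfolded S_def]])
  have "\<bar>f (u + - h) - f u - (\<Sum>i\<in>UNIV. (- h) $ i * Df i u)\<bar> \<le> (K * S) * (\<Sum>i\<in>UNIV. \<bar>(- h) $ i\<bar>)"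
    by (rule coordinatewise_linearization_bound[OF d1 lipschitz]) simp
  then have minus: "\<bar>f (u - h) - f u + (\<Sum>i\<in>UNIV. h $ i * Df i u)\<bar> \<le> (K * S) * S"
    by (simp add: S_def sum_negf)
  have "\<bar>f (u + h) + f (u - h) - 2 * f u\<bar> \<le> (K * S) * S + (K * S) * S"
    using plus minus by linarith
  then show ?thesis
    by (simp add: S_def power2_eq_square algebra_simps)
qed

definition sym_diff_quotient :: "real \<Rightarrow> ('a::real_normed_vector \<Rightarrow> real) \<Rightarrow> 'a \<Rightarrow> 'a \<Rightarrow> real" where
  "sym_diff_quotient \<alpha> f u h = (2 * f u - f (u + h) - f (u - h)) / (2 * norm h powr \<alpha>)"

text \<open>The first term bounds the quotient for \<open>|h| \<le> 1\<close> via second differences, the other two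
  for \<open>|h| \<ge> 1\<close> via the decay of \<open>f\<close> and \<open>poly_weight_mult_norm_powr_le\<close>.\<close>
definition sym_diff_majorant :: "real \<Rightarrow> real \<Rightarrow> real^'n::finite \<Rightarrow> real^'n \<Rightarrow> real" where
  "sym_diff_majorant \<alpha> C u h = poly_weight \<alpha> u *
     (C * 2 powr \<alpha> * real CARD('n) ^ 2 * (indicator (cball 0 1) h * norm h powr (2 - \<alpha>))
      + C * (1 + 2 powr \<alpha>) * (indicator {x. 1 \<le> norm x} h * norm h powr -\<alpha>)
      + C * 3 powr \<alpha> * (poly_weight \<alpha> (u + h) + poly_weight \<alpha> (u - h)))"

lemma sym_diff_majorant_nonneg: "0 \<le> C \<Longrightarrow> 0 \<le> sym_diff_majorant \<alpha> C u h"
  unfolding sym_diff_majorant_def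
  by (intro mult_nonneg_nonneg add_nonneg_nonneg) (auto simp: poly_weight_nonneg)

lemma
  assumes "real CARD('n) < \<alpha>" "\<alpha> < real CARD('n) + 2"
  shows integrable_sym_diff_majorant:
      "integrable lborel (sym_diff_majorant \<alpha> C (u :: real^'n::finite))"
    and integral_sym_diff_majorant:
      "(\<integral>h. sym_diff_majorant \<alpha> C u h \<partial>lborel)
        = poly_weight \<alpha> u * (\<integral>h. sym_diff_majorant \<alpha> C (0 :: real^'n) h \<partial>lborel)"
proof -
  have near: "integrable lborel (\<lambda>h::real^'n. indicator (cball 0 1) h * norm h powr (2 - \<alpha>))"
    using assms by (intro integrable_norm_powr_in_ball) simp
  have far: "integrable lborel (\<lambda>h::real^'n. indicator {x. 1 \<le> norm x} h * norm h powr -\<alpha>)"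
    using assms by (intro integrable_norm_powr_outside_ball) simp
  have weight: "integrable lborel (poly_weight \<alpha> :: real^'n \<Rightarrow> real)"
    using assms by (intro integrable_poly_weight) simp
  have shifted: "integrable lborel (\<lambda>h. poly_weight \<alpha> (v + c *\<^sub>R h))"
    if "\<bar>c\<bar> = 1" for v :: "real^'n" and c :: real
    using that weight by (rule integrable_lborel_unit_affine)
  have integral_shifted:
      "(\<integral>h. poly_weight \<alpha> (v + c *\<^sub>R h) \<partial>lborel) = (\<integral>h. poly_weight \<alpha> (h::real^'n) \<partial>lborel)"
    if "\<bar>c\<bar> = 1" for v :: "real^'n" and c :: real
    using that by (rule integral_lborel_unit_affine) simp
  note integrable = near far weight shifted[of 1] shifted[of "-1"]
  show "integrable lborel (sym_diff_majorant \<alpha> C u)"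
    unfolding sym_diff_majorant_def[abs_def] using integrable
    by (intro integrable_mult_right Bochner_Integration.integrable_add) simp_all
  show "(\<integral>h. sym_diff_majorant \<alpha> C u h \<partial>lborel)
      = poly_weight \<alpha> u * (\<integral>h. sym_diff_majorant \<alpha> C (0 :: real^'n) h \<partial>lborel)"
    unfolding sym_diff_majorant_def
    using integrable integral_shifted[of 1] integral_shifted[of "-1"]
    by (simp add: Bochner_Integration.integral_add integrable_mult_right
        Bochner_Integration.integrable_add)
qed

context
  fixes f :: "real^'n::finite \<Rightarrow> real" and Df :: "'n \<Rightarrow> real^'n \<Rightarrow> real"
    and D2f :: "'n \<Rightarrow> 'n \<Rightarrow> real^'n \<Rightarrow> real" and C \<alpha> :: real
  assumes d1: "\<And>x i. ((\<lambda>t. f (x + t *\<^sub>R axis i 1)) has_real_derivative Df i x) (at 0)"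
    and d2: "\<And>x i j. ((\<lambda>t. Df i (x + t *\<^sub>R axis j 1)) has_real_derivative D2f j i x) (at 0)"
    and f_bound: "\<And>x. \<bar>f x\<bar> \<le> C * poly_weight \<alpha> x"
    and D2f_bound: "\<And>x i j. \<bar>D2f j i x\<bar> \<le> C * poly_weight \<alpha> x"
begin

private lemma weighted_bound_nonneg: "0 \<le> C"
  using f_bound[of 0] by simp

lemma sym_diff_quotient_near:
  assumes "0 < norm h" "norm h \<le> 1" and \<alpha>_nonneg: "0 \<le> \<alpha>"
  shows "\<bar>sym_diff_quotient \<alpha> f u h\<bar>
    \<le> poly_weight \<alpha> u * (C * 2 powr \<alpha> * real CARD('n) ^ 2 * norm h powr (2 - \<alpha>))"
proof -
  define K where "K = C * 2 powr \<alpha> * poly_weight \<alpha> u"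
  have "0 \<le> K"
    using weighted_bound_nonneg by (simp add: K_def poly_weight_nonneg)
  have "\<bar>f (u + h) + f (u - h) - 2 * f u\<bar> \<le> 2 * K * (\<Sum>k\<in>UNIV. \<bar>h $ k\<bar>)\<^sup>2"
  proof (rule second_difference_bound[OF d1 d2])
    fix i j y
    assume "\<forall>k. \<bar>(y - u) $ k\<bar> \<le> \<bar>h $ k\<bar>"
    then have "norm (y - u) \<le> 1"
      using assms(2) norm_le_componentwise_cart[of "y - u" h] by simp
    then have "poly_weight \<alpha> y \<le> 2 powr \<alpha> * poly_weight \<alpha> u"
      using \<alpha>_nonneg by (rule poly_weight_le_near)
    then show "\<bar>D2f j i y\<bar> \<le> K"
      using D2f_bound[where x = y and i = i and j = j] weighted_bound_nonneg unfolding K_def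
      by (metis mult.assoc mult_left_mono order_trans)
  qed
  also have "\<dots> \<le> 2 * K * (real CARD('n) * norm h)\<^sup>2"
  proof -
    have "(\<Sum>k\<in>UNIV. \<bar>h $ k\<bar>) \<le> (\<Sum>k\<in>(UNIV::'n set). norm h)"
      by (intro sum_mono component_le_norm_cart)
    then show ?thesis
      using \<open>0 \<le> K\<close> by (intro mult_left_mono power_mono) (auto intro: sum_nonneg)
  qed
  finally have numerator: "\<bar>2 * f u - f (u + h) - f (u - h)\<bar> \<le> 2 * K * (real CARD('n) * norm h)\<^sup>2"
    by simp
  have "\<bar>sym_diff_quotient \<alpha> f u h\<bar> = \<bar>2 * f u - f (u + h) - f (u - h)\<bar> / (2 * norm h powr \<alpha>)"
    by (simp add: sym_diff_quotient_def abs_divide)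
  also have "\<dots> \<le> 2 * K * (real CARD('n) * norm h)\<^sup>2 / (2 * norm h powr \<alpha>)"
    using numerator by (rule divide_right_mono) simp
  also have "\<dots> = K * real CARD('n) ^ 2 * (norm h powr 2 / norm h powr \<alpha>)"
    using assms(1) by (simp add: power_mult_distrib powr_realpow)
  also have "\<dots> = poly_weight \<alpha> u * (C * 2 powr \<alpha> * real CARD('n) ^ 2 * norm h powr (2 - \<alpha>))"
    by (simp add: K_def powr_diff mult_ac)
  finally show ?thesis .
qed

lemma sym_diff_quotient_far:
  assumes "1 \<le> norm h" and \<alpha>_nonneg: "0 \<le> \<alpha>"
  shows "\<bar>sym_diff_quotient \<alpha> f u h\<bar> \<le> poly_weight \<alpha> u *
    (C * (1 + 2 powr \<alpha>) * norm h powr -\<alpha>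
      + C * 3 powr \<alpha> * (poly_weight \<alpha> (u + h) + poly_weight \<alpha> (u - h)))"
proof -
  define w where "w = (poly_weight \<alpha> :: real^'n \<Rightarrow> real)"
  define P where "P = norm h powr -\<alpha>"
  have "0 \<le> C" "0 \<le> P" "0 \<le> w u"
    using weighted_bound_nonneg by (simp_all add: P_def w_def poly_weight_nonneg)
  have numerator:
      "\<bar>2 * f u - f (u + h) - f (u - h)\<bar> \<le> 2 * (C * w u) + C * w (u + h) + C * w (u - h)"
    using f_bound[of u] f_bound[of "u + h"] f_bound[of "u - h"] unfolding w_def by linarith
  have "\<bar>sym_diff_quotient \<alpha> f u h\<bar> = \<bar>2 * f u - f (u + h) - f (u - h)\<bar> * P / 2"
    by (simp add: sym_diff_quotient_def abs_divide P_def powr_minus_divide)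
  also have "\<dots> \<le> (2 * (C * w u) + C * w (u + h) + C * w (u - h)) * P / 2"
    using numerator \<open>0 \<le> P\<close> by (intro divide_right_mono mult_right_mono) simp_all
  also have "\<dots> = C * (w u * P) + C * (w (u + h) * P) / 2 + C * (w (u - h) * P) / 2"
    by (simp add: algebra_simps)
  also have "\<dots> \<le> C * (w u * P) + C * (2 powr \<alpha> * w u * P + 3 powr \<alpha> * w u * w (u + h)) / 2
      + C * (2 powr \<alpha> * w u * P + 3 powr \<alpha> * w u * w (u - h)) / 2"
    using poly_weight_mult_norm_powr_le[OF assms, of u]
      poly_weight_mult_norm_powr_le[of "- h" \<alpha> u] assms \<alpha>_nonneg \<open>0 \<le> C\<close>
    unfolding w_def P_def
    by (intro add_mono divide_right_mono mult_left_mono) (simp_all add: poly_weight_nonneg)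
  also have "\<dots> \<le> w u * (C * (1 + 2 powr \<alpha>) * P + C * 3 powr \<alpha> * (w (u + h) + w (u - h)))"
  proof -
    have "0 \<le> C * 3 powr \<alpha> * w u * (w (u + h) + w (u - h))"
      using \<open>0 \<le> C\<close> \<open>0 \<le> w u\<close> by (simp add: w_def poly_weight_nonneg)
    then show ?thesis
      by (simp add: field_simps)
  qed
  finally show ?thesis
    by (simp add: w_def P_def)
qed

lemma abs_sym_diff_quotient_le_majorant:
  assumes "0 \<le> \<alpha>"
  shows "\<bar>sym_diff_quotient \<alpha> f u h\<bar> \<le> sym_diff_majorant \<alpha> C u h"
proof -
  have "0 \<le> C"
    by (rule weighted_bound_nonneg)
  have nonneg:
    "0 \<le> C * 2 powr \<alpha> * real CARD('n) ^ 2 * (indicator (cball 0 1) h * norm h powr (2 - \<alpha>))"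
    "0 \<le> C * (1 + 2 powr \<alpha>) * (indicator {x. 1 \<le> norm x} h * norm h powr -\<alpha>)"
    "0 \<le> C * 3 powr \<alpha> * (poly_weight \<alpha> (u + h) + poly_weight \<alpha> (u - h))"
    using \<open>0 \<le> C\<close> by (simp_all add: poly_weight_nonneg)
  consider "h = 0" | "0 < norm h" "norm h \<le> 1" | "1 < norm h"
    by fastforce
  then show ?thesis
  proof cases
    case 1
    then show ?thesis
      using \<open>0 \<le> C\<close> by (simp add: sym_diff_quotient_def sym_diff_majorant_nonneg)
  next
    case 2
    then have "\<bar>sym_diff_quotient \<alpha> f u h\<bar>
        \<le> poly_weight \<alpha> u * (C * 2 powr \<alpha> * real CARD('n) ^ 2 * norm h powr (2 - \<alpha>))"
      using assms by (rule sym_diff_quotient_near)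
    also have "\<dots> \<le> sym_diff_majorant \<alpha> C u h"
      using 2 nonneg unfolding sym_diff_majorant_def
      by (intro mult_left_mono) (simp_all add: poly_weight_nonneg)
    finally show ?thesis .
  next
    case 3
    then have "\<bar>sym_diff_quotient \<alpha> f u h\<bar> \<le> poly_weight \<alpha> u *
        (C * (1 + 2 powr \<alpha>) * norm h powr -\<alpha>
          + C * 3 powr \<alpha> * (poly_weight \<alpha> (u + h) + poly_weight \<alpha> (u - h)))"
      using assms by (intro sym_diff_quotient_far) simp_all
    also have "\<dots> \<le> sym_diff_majorant \<alpha> C u h"
      using 3 nonneg unfolding sym_diff_majorant_def
      by (intro mult_left_mono) (simp_all add: poly_weight_nonneg)
    finally show ?thesis .
  qed
qed

context
  assumes f_continuous: "continuous_on UNIV f"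
    and \<alpha>_gt: "real CARD('n) < \<alpha>" and \<alpha>_lt: "\<alpha> < real CARD('n) + 2"
begin

private lemma borel_measurable_f [measurable]: "f \<in> borel_measurable borel"
  using f_continuous by (rule borel_measurable_continuous_onI)

private lemma \<alpha>_nonneg: "0 \<le> \<alpha>"
  using \<alpha>_gt of_nat_0_le_iff[of "CARD('n)"] by linarith

lemma integrable_sym_diff_quotient: "integrable lborel (sym_diff_quotient \<alpha> f u)"
proof (rule Bochner_Integration.integrable_bound)
  show "integrable lborel (sym_diff_majorant \<alpha> C u)"
    using \<alpha>_gt \<alpha>_lt by (rule integrable_sym_diff_majorant)
  show "sym_diff_quotient \<alpha> f u \<in> borel_measurable lborel"
    unfolding sym_diff_quotient_def[abs_def] by measurable
  show "AE h in lborel. norm (sym_diff_quotient \<alpha> f u h) \<le> norm (sym_diff_majorant \<alpha> C u h)"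
    using abs_sym_diff_quotient_le_majorant[OF \<alpha>_nonneg]
    by (intro AE_I2) (simp add: order_trans[OF _ abs_ge_self])
qed

lemma abs_integral_sym_diff_quotient_le:
  "\<bar>\<integral>h. sym_diff_quotient \<alpha> f u h \<partial>lborel\<bar>
    \<le> poly_weight \<alpha> u * (\<integral>h. sym_diff_majorant \<alpha> C (0 :: real^'n) h \<partial>lborel)"
proof -
  have "\<bar>\<integral>h. sym_diff_quotient \<alpha> f u h \<partial>lborel\<bar> \<le> (\<integral>h. \<bar>sym_diff_quotient \<alpha> f u h\<bar> \<partial>lborel)"
    by (rule integral_abs_bound)
  also have "\<dots> \<le> (\<integral>h. sym_diff_majorant \<alpha> C u h \<partial>lborel)"
    using integrable_sym_diff_quotient integrable_sym_diff_majorant[OF \<alpha>_gt \<alpha>_lt]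
      abs_sym_diff_quotient_le_majorant[OF \<alpha>_nonneg]
    by (intro integral_mono) auto
  also have "\<dots> = poly_weight \<alpha> u * (\<integral>h. sym_diff_majorant \<alpha> C (0 :: real^'n) h \<partial>lborel)"
    using \<alpha>_gt \<alpha>_lt by (rule integral_sym_diff_majorant)
  finally show ?thesis .
qed

lemma integrable_truncated_diff_quotient:
  assumes "0 < \<epsilon>"
  shows "integrable lborel (\<lambda>h. indicator {h. \<epsilon> \<le> norm h} h * ((f u - f (u + h)) / norm h powr \<alpha>))"
proof (rule Bochner_Integration.integrable_bound)
  show "integrable lborel (\<lambda>h::real^'n. 2 * C *
      (indicator {x. 1 \<le> norm x} h * norm h powr -\<alpha> + \<epsilon> powr -\<alpha> * indicator (cball 0 1) h))"
    using \<alpha>_gt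
    by (intro integrable_mult_right Bochner_Integration.integrable_add
        integrable_norm_powr_outside_ball integrable_real_indicator) (auto simp: emeasure_cball)
  have f_le: "\<bar>f x\<bar> \<le> C" for x
    using f_bound[of x] poly_weight_le_one[OF \<alpha>_nonneg, of x] weighted_bound_nonneg
    by (meson mult_left_le order_trans)
  have "\<bar>f u - f (u + h)\<bar> \<le> 2 * C" for h
    using f_le[of u] f_le[of "u + h"] by linarith
  then have "\<bar>indicator {h. \<epsilon> \<le> norm h} h * ((f u - f (u + h)) / norm h powr \<alpha>)\<bar>
      \<le> indicator {h. \<epsilon> \<le> norm h} h * (2 * C / norm h powr \<alpha>)" for h
    by (auto simp: abs_mult abs_divide indicator_def intro: divide_right_mono)
  also have "\<dots> h = 2 * C * (indicator {h. \<epsilon> \<le> norm h} h * norm h powr -\<alpha>)" for h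
    by (simp add: powr_minus_divide)
  also have "\<dots> h \<le> 2 * C *
      (indicator {x. 1 \<le> norm x} h * norm h powr -\<alpha> + \<epsilon> powr -\<alpha> * indicator (cball 0 1) h)"
    for h :: "real^'n"
    using assms \<alpha>_nonneg weighted_bound_nonneg
    by (intro mult_left_mono) (auto simp: indicator_def intro: powr_mono2')
  finally show "AE h in lborel.
      norm (indicator {h. \<epsilon> \<le> norm h} h * ((f u - f (u + h)) / norm h powr \<alpha>))
      \<le> norm (2 * C * (indicator {x. 1 \<le> norm x} h * norm h powr -\<alpha>
        + \<epsilon> powr -\<alpha> * indicator (cball 0 1) (h::real^'n)))"
    by (intro AE_I2) (simp add: order_trans[OF _ abs_ge_self])
qed simp

text \<open>Substituting \<open>v = u + h\<close> and averaging with the reflection \<open>h \<mapsto> -h\<close> symmetrises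
  the integrand; the first-order terms cancel, which is what makes the limit exist.\<close>
lemma truncated_integral_eq_sym_diff_quotient:
  assumes "0 < \<epsilon>"
  shows "(LINT v:{v. \<epsilon> \<le> dist v u}|lborel. (f u - f v) / dist v u powr \<alpha>)
    = (\<integral>h. indicator {h. \<epsilon> \<le> norm h} h * sym_diff_quotient \<alpha> f u h \<partial>lborel)"
proof -
  define a where "a h = indicator {h. \<epsilon> \<le> norm h} h * ((f u - f (u + h)) / norm h powr \<alpha>)"
    for h :: "real^'n"
  have [measurable]: "a \<in> borel_measurable borel"
    unfolding a_def by measurable
  have integrable: "integrable lborel a"
    unfolding a_def[abs_def] using assms by (rule integrable_truncated_diff_quotient)
  have "(LINT v:{v. \<epsilon> \<le> dist v u}|lborel. (f u - f v) / dist v u powr \<alpha>)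
      = (\<integral>v. indicator {v. \<epsilon> \<le> dist v u} v * ((f u - f v) / dist v u powr \<alpha>) \<partial>lborel)"
    by (simp add: set_lebesgue_integral_def)
  also have "\<dots> = (\<integral>h. indicator {v. \<epsilon> \<le> dist v u} (u + 1 *\<^sub>R h)
      * ((f u - f (u + 1 *\<^sub>R h)) / dist (u + 1 *\<^sub>R h) u powr \<alpha>) \<partial>lborel)"
    by (rule integral_lborel_unit_affine[symmetric]) simp_all
  also have "\<dots> = (\<integral>h. a h \<partial>lborel)"
    by (simp add: a_def dist_norm indicator_def)
  also have "\<dots> = ((\<integral>h. a h \<partial>lborel) + (\<integral>h. a (0 + (-1) *\<^sub>R h) \<partial>lborel)) / 2"
    by (subst integral_lborel_unit_affine) simp_all
  also have "\<dots> = (\<integral>h. (a h + a (- h)) / 2 \<partial>lborel)"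
    using integrable integrable_lborel_unit_affine[of "-1" a 0]
    by (simp add: Bochner_Integration.integral_add)
  also have "\<dots> = (\<integral>h. indicator {h. \<epsilon> \<le> norm h} h * sym_diff_quotient \<alpha> f u h \<partial>lborel)"
    by (intro Bochner_Integration.integral_cong)
       (auto simp: a_def sym_diff_quotient_def indicator_def diff_divide_distrib add_divide_distrib)
  finally show ?thesis .
qed

lemma tendsto_truncated_integral:
  "((\<lambda>\<epsilon>. LINT v:{v. \<epsilon> \<le> dist v u}|lborel. (f u - f v) / dist v u powr \<alpha>)
     \<longlongrightarrow> (\<integral>h. sym_diff_quotient \<alpha> f u h \<partial>lborel)) (at_right 0)"
proof -
  let ?q = "sym_diff_quotient \<alpha> f u"
  have [measurable]: "?q \<in> borel_measurable borel"
    unfolding sym_diff_quotient_def[abs_def] by measurable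
  have "((\<lambda>t. \<integral>h. indicator {h. inverse t \<le> norm h} h * ?q h \<partial>lborel) \<longlongrightarrow> (\<integral>h. ?q h \<partial>lborel)) at_top"
  proof (rule integral_dominated_convergence_at_top[where w = "sym_diff_majorant \<alpha> C u"])
    show "integrable lborel (sym_diff_majorant \<alpha> C u)"
      using \<alpha>_gt \<alpha>_lt by (rule integrable_sym_diff_majorant)
    show "AE h in lborel. ((\<lambda>t. indicator {h. inverse t \<le> norm h} h * ?q h) \<longlongrightarrow> ?q h) at_top"
    proof (rule AE_I2)
      fix h :: "real^'n"
      show "((\<lambda>t. indicator {h. inverse t \<le> norm h} h * ?q h) \<longlongrightarrow> ?q h) at_top"
      proof (cases "h = 0")
        case True
        then show ?thesis
          by (simp add: sym_diff_quotient_def)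
      next
        case False
        then have "\<forall>\<^sub>F t in at_top. indicator {h. inverse t \<le> norm h} h * ?q h = ?q h"
          unfolding eventually_at_top_linorder
          by (intro exI[of _ "inverse (norm h)"]) (auto simp: inverse_le_imp_le)
        then show ?thesis
          by (rule tendsto_eventually)
      qed
    qed
    show "\<forall>\<^sub>F t in at_top. AE h in lborel. norm (indicator {h. inverse t \<le> norm h} h * ?q h)
        \<le> sym_diff_majorant \<alpha> C u h"
      using abs_sym_diff_quotient_le_majorant[OF \<alpha>_nonneg]
        sym_diff_majorant_nonneg[OF weighted_bound_nonneg]
      by (intro always_eventually allI AE_I2) (auto simp: indicator_def intro: order_trans)
  qed simp_all
  then have "((\<lambda>\<epsilon>. \<integral>h. indicator {h. \<epsilon> \<le> norm h} h * ?q h \<partial>lborel)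
      \<longlongrightarrow> (\<integral>h. ?q h \<partial>lborel)) (at_right 0)"
    by (subst filterlim_at_right_to_top)
  then show ?thesis
    by (rule Lim_transform_eventually)
       (auto simp: truncated_integral_eq_sym_diff_quotient eventually_at_right_less
         intro: eventually_mono[OF eventually_at_right_less])
qed

text \<open>\<open>frac_lap\<close> is defined through \<open>Lim\<close>, which is the principal value only because the
  truncated integrals converge.\<close>
lemma frac_lap_eq_integral_sym_diff_quotient:
  assumes "\<alpha> = real CARD('n) + \<gamma>"
  shows "frac_lap \<gamma> f u = c_gamma \<gamma> TYPE('n) * (\<integral>h. sym_diff_quotient \<alpha> f u h \<partial>lborel)"
  unfolding frac_lap_def assms[symmetric]
  using tendsto_Lim[OF trivial_limit_at_right_real tendsto_truncated_integral] by simp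

lemma abs_frac_lap_le:
  assumes "\<alpha> = real CARD('n) + \<gamma>"
  shows "\<bar>frac_lap \<gamma> f u\<bar>
    \<le> \<bar>c_gamma \<gamma> TYPE('n)\<bar> * (\<integral>h. sym_diff_majorant \<alpha> C (0 :: real^'n) h \<partial>lborel) * poly_weight \<alpha> u"
  unfolding frac_lap_eq_integral_sym_diff_quotient[OF assms] abs_mult
  using mult_left_mono[OF abs_integral_sym_diff_quotient_le[of u]
      abs_ge_zero[of "c_gamma \<gamma> TYPE('n)"]]
  by (simp add: mult_ac)

end

end

lemma pderivs_le_bracket:
  fixes f :: "real^'n::finite \<Rightarrow> real"
  assumes "length is \<le> j"
  shows "\<bar>pderivs is f x\<bar> \<le> bracket j f x"
proof -
  define S where "S = (\<Sum>m\<in>{1..j}. \<Sum>is\<in>{is::'n list. length is = m}. \<bar>pderivs is f x\<bar>)"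
  have finite_lists: "finite {is::'n list. length is = m}" for m
    using finite_lists_length_eq[of "UNIV :: 'n set" m] by simp
  have "0 \<le> S"
    unfolding S_def by (intro sum_nonneg) auto
  have bracket: "bracket j f x = \<bar>f x\<bar> + S"
    by (simp add: bracket_def S_def)
  show ?thesis
  proof (cases "is = []")
    case True
    then show ?thesis
      using \<open>0 \<le> S\<close> bracket by simp
  next
    case False
    then have "length is \<in> {1..j}"
      using assms by (auto simp: Suc_le_eq)
    then have "\<bar>pderivs is f x\<bar> \<le> S"
      unfolding S_def
      by (intro member_le_sum[of "length is", THEN order_trans[rotated]] member_le_sum)
         (auto intro: sum_nonneg finite_lists)
    then show ?thesis
      using bracket by simp
  qed
qed

lemma one_plus_power_le: "0 \<le> t \<Longrightarrow> (1 + t) ^ N \<le> 2 ^ N * (1 + t ^ N)" for t :: real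
proof -
  assume "0 \<le> t"
  have "(1 + t) ^ N \<le> (2 * max 1 t) ^ N"
    using \<open>0 \<le> t\<close> by (intro power_mono) auto
  also have "\<dots> \<le> 2 ^ N * (1 + t ^ N)"
    using \<open>0 \<le> t\<close> by (auto simp: power_mult_distrib max_def)
  finally show ?thesis .
qed

lemma Sk_pderivs_le_poly_weight:
  fixes G :: "real \<Rightarrow> real^'n::finite \<Rightarrow> real"
  assumes "G \<in> Sk T k" "0 \<le> \<alpha>"
  obtains C where "\<And>s x is. s \<in> {0..T} \<Longrightarrow> length is \<le> k \<Longrightarrow> \<bar>pderivs is (G s) x\<bar> \<le> C * poly_weight \<alpha> x"
proof -
  define N where "N = nat \<lceil>\<alpha>\<rceil>"
  have decay: "\<exists>M. \<forall>s\<in>{0..T}. \<forall>x::real^'n. norm x ^ r * bracket k (G s) x \<le> M" for r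
    using assms(1) by (simp add: Sk_def)
  obtain M0 MN where
    M0: "\<And>s x. s \<in> {0..T} \<Longrightarrow> bracket k (G s) x \<le> M0" and
    MN: "\<And>s x. s \<in> {0..T} \<Longrightarrow> norm x ^ N * bracket k (G s) x \<le> MN"
    using decay[of 0] decay[of N] by (metis atLeastAtMost_iff power_0 mult_1)
  define C where "C = 2 ^ N * (\<bar>M0\<bar> + \<bar>MN\<bar>)"
  have weighted: "bracket k (G s) x \<le> C * poly_weight \<alpha> x" if "s \<in> {0..T}" for s x
  proof -
    define b where "b = bracket k (G s) x"
    have "0 \<le> b"
      using pderivs_le_bracket[of "[]" k "G s" x] by (simp add: b_def)
    have "(1 + norm x) powr \<alpha> \<le> (1 + norm x) powr real N"
      using real_nat_ceiling_ge[of \<alpha>] by (intro powr_mono) (auto simp: N_def)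
    also have "\<dots> = (1 + norm x) ^ N"
      by (simp add: powr_realpow add_pos_nonneg)
    finally have "(1 + norm x) powr \<alpha> * b \<le> (1 + norm x) ^ N * b"
      using \<open>0 \<le> b\<close> by (rule mult_right_mono)
    also have "\<dots> \<le> 2 ^ N * (1 + norm x ^ N) * b"
      using \<open>0 \<le> b\<close> by (intro mult_right_mono one_plus_power_le) auto
    also have "\<dots> = 2 ^ N * (b + norm x ^ N * b)"
      by (simp add: algebra_simps)
    also have "\<dots> \<le> C"
      unfolding C_def using M0[OF that, of x] MN[OF that, of x] by (auto simp: b_def)
    finally have "(1 + norm x) powr \<alpha> * b \<le> C" .
    moreover have "0 < (1 + norm x) powr \<alpha>"
      using add_pos_nonneg[OF zero_less_one norm_ge_zero[of x]] by simp
    ultimately show ?thesis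
      by (simp add: b_def poly_weight_def powr_minus_divide pos_le_divide_eq mult.commute)
  qed
  show ?thesis
  proof (rule that)
    show "\<bar>pderivs is (G s) x\<bar> \<le> C * poly_weight \<alpha> x" if "s \<in> {0..T}" "length is \<le> k" for s x "is"
      using pderivs_le_bracket[OF that(2)] weighted[OF that(1)] by (rule order_trans)
  qed
qed

lemma Sk_has_partial_derivative:
  assumes "G \<in> Sk T k" "length is < k" "0 \<le> s"
  shows "((\<lambda>t. pderivs is (G s) (x + t *\<^sub>R axis i 1))
    has_real_derivative pderivs (i # is) (G s) x) (at 0)"
  using assms by (simp add: Sk_def pderiv_i_def DERIV_deriv_iff_real_differentiable)

lemma Sk_continuous_on_slice:
  assumes "G \<in> Sk T k" "0 \<le> s"
  shows "continuous_on UNIV (G s)"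
proof -
  have "continuous_on ({0..} \<times> UNIV) (\<lambda>(s, x). G s x)"
    using assms(1) by (auto simp: Sk_def dest: spec[of _ "[]"])
  then have "continuous_on UNIV ((\<lambda>(s, x). G s x) \<circ> Pair s)"
    using assms(2)
    by (intro continuous_on_compose continuous_intros) (auto elim: continuous_on_subset)
  then show ?thesis
    by (simp add: o_def)
qed

lemma Sk_abs_frac_lap_le:
  fixes G :: "real \<Rightarrow> real^'n::finite \<Rightarrow> real"
  assumes G: "G \<in> Sk T 2" and "0 \<le> s"
    and bound: "\<And>x is. length is \<le> 2 \<Longrightarrow> \<bar>pderivs is (G s) x\<bar> \<le> C * poly_weight \<alpha> x"
    and \<alpha>: "\<alpha> = real CARD('n) + \<gamma>" and "0 < \<gamma>" "\<gamma> < 2"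
  shows "\<bar>frac_lap \<gamma> (G s) u\<bar>
    \<le> \<bar>c_gamma \<gamma> TYPE('n)\<bar> * (\<integral>h. sym_diff_majorant \<alpha> C (0 :: real^'n) h \<partial>lborel) * poly_weight \<alpha> u"
proof (rule abs_frac_lap_le
    [where Df = "\<lambda>i. pderivs [i] (G s)" and D2f = "\<lambda>j i. pderivs [j, i] (G s)"])
  show "((\<lambda>t. G s (x + t *\<^sub>R axis i 1)) has_real_derivative pderivs [i] (G s) x) (at 0)" for x i
    using Sk_has_partial_derivative[OF G, of "[]"] \<open>0 \<le> s\<close> by simp
  show "((\<lambda>t. pderivs [i] (G s) (x + t *\<^sub>R axis j 1))
      has_real_derivative pderivs [j, i] (G s) x) (at 0)"
    for x i j
    using Sk_has_partial_derivative[OF G, of "[i]"] \<open>0 \<le> s\<close> by simp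
  show "\<bar>G s x\<bar> \<le> C * poly_weight \<alpha> x" for x
    using bound[of "[]"] by simp
  show "\<bar>pderivs [j, i] (G s) x\<bar> \<le> C * poly_weight \<alpha> x" for x i j
    using bound[of "[j, i]"] by simp
  show "continuous_on UNIV (G s)"
    using G \<open>0 \<le> s\<close> by (rule Sk_continuous_on_slice)
qed (use assms in simp_all)

theorem mainTheorem10:
  fixes T \<gamma> :: real and G :: "real \<Rightarrow> real^'n::finite \<Rightarrow> real"
  assumes "T > 0" and "0 < \<gamma>" and "\<gamma> < 2"
    and "G \<in> S_gamma T \<gamma>"
  shows "\<exists>H C. integrable lborel H \<and> C > 0 \<and>
           (\<forall>u. (\<forall>s\<in>{0..T}. \<bar>frac_lap \<gamma> (G s) u\<bar> \<le> H u) \<and> H u \<le> C)"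
proof -
  define \<alpha> where "\<alpha> = real CARD('n) + \<gamma>"
  have \<alpha>: "real CARD('n) < \<alpha>" "0 \<le> \<alpha>"
    using assms(2) by (auto simp: \<alpha>_def)
  have G: "G \<in> Sk T 2"
    using assms(4) by (auto simp: S_gamma_def Sk_c_def split: if_splits)
  obtain C where C: "\<And>s x is. s \<in> {0..T} \<Longrightarrow> length is \<le> 2 \<Longrightarrow>
      \<bar>pderivs is (G s) x\<bar> \<le> C * poly_weight \<alpha> x"
    using Sk_pderivs_le_poly_weight[OF G \<alpha>(2)] by blast
  define E where "E = \<bar>c_gamma \<gamma> TYPE('n)\<bar> * (\<integral>h. sym_diff_majorant \<alpha> C (0 :: real^'n) h \<partial>lborel)"
  have "\<bar>frac_lap \<gamma> (G s) u\<bar> \<le> E * poly_weight \<alpha> u" if "s \<in> {0..T}" for s u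
    unfolding E_def using G _ C[OF that] \<alpha>_def assms(2,3)
    by (rule Sk_abs_frac_lap_le) (use that in simp)
  moreover have "integrable lborel (\<lambda>u :: real^'n. E * poly_weight \<alpha> u)"
    using integrable_poly_weight[where 'a = "real^'n", of \<alpha>] \<alpha>(1) by simp
  moreover have "E * poly_weight \<alpha> u \<le> \<bar>E\<bar> + 1" for u :: "real^'n"
    using mult_poly_weight_le_abs[OF \<alpha>(2), of E u] by linarith
  ultimately show ?thesis
    by (intro exI[of _ "\<lambda>u. E * poly_weight \<alpha> u"] exI[of _ "\<bar>E\<bar> + 1"]) auto
qed

end
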